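(* Let $\mathfrak{R}$ be an alternative ring with a nontrivial idempotent $e_1$ and Peirce decomposition $\mathfrak{R}=\mathfrak{R}_{11}\oplus\mathfrak{R}_{12}\oplus\mathfrak{R}_{21}\oplus\mathfrak{R}_{22}$, satisfying: (i) if $a_{11}\in\mathfrak{R}_{11}$, $a_{22}\in\mathfrak{R}_{22}$ and $[a_{11}+a_{22},\mathfrak{R}_{12}]=0$, then $a_{11}+a_{22}\in\mathcal{Z}(\mathfrak{R})$; (ii) if $a_{11}\in\mathfrak{R}_{11}$, $a_{22}\in\mathfrak{R}_{22}$ and $[a_{11}+a_{22},\mathfrak{R}_{21}]=0$, then $a_{11}+a_{22}\in\mathcal{Z}(\mathfrak{R})$. Let $\mathcal{D}$ be a multiplicative Lie-type derivation of $\mathfrak{R}$. Then for any $a_{11}\in\mathfrak{R}_{11}$, $b_{12}\in\mathfrak{R}_{12}$, $c_{21}\in\mathfrak{R}_{21}$, $d_{22}\in\mathfrak{R}_{22}$ there exists $z\in\mathcal{Z}(\mathfrak{R})$ such that $\mathcal{D}(a_{11}+b_{12}+c_{21}+d_{22})=\mathcal{D}(a_{11})+\mathcal{D}(b_{12})+\mathcal{D}(c_{21})+\mathcal{D}(d_{22})+z$.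
   Context: Rings are not assumed associative or unital. The associator is $(x,y,z)=(xy)z-x(yz)$; $\mathfrak{R}$ is alternative if $(x,x,y)=0=(y,x,x)$ for all $x,y$. $[x,y]=xy-yx$ and $\mathcal{Z}(\mathfrak{R})=\{r: [r,x]=0\ \forall x\in\mathfrak{R}\}$. Define $p_1(x)=x$, $p_n(x_1,\dots,x_n)=[p_{n-1}(x_1,\dots,x_{n-1}),x_n]$. For $n\ge2$, a (not necessarily additive) map $\mathcal{D}\colon\mathfrak{R}\to\mathfrak{R}$ is a multiplicative Lie $n$-derivation if $\mathcal{D}(p_n(x_1,\dots,x_n))=\sum_{i=1}^n p_n(x_1,\dots,\mathcal{D}(x_i),\dots,x_n)$ for all $x_i\in\mathfrak{R}$; a multiplicative Lie-type derivation is a multiplicative Lie $n$-derivation for some $n\ge2$. A nontrivial idempotent is $e_1\ne0$ with $e_1^2=e_1$ which is not a multiplicative identity. With $e_2a:=a-e_1a$, $ae_2:=a-ae_1$, set $\mathfrak{R}_{ij}=e_i\mathfrak{R}e_j$ ($i,j=1,2$), so $\mathfrak{R}=\bigoplus_{i,j}\mathfrak{R}_{ij}$. *)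

theory Defs
  imports Main
begin

class nonassoc_ring = ab_group_add + times +
  assumes na_distrib_right: "(a + b) * c = a * c + b * c"
  and na_distrib_left: "a * (b + c) = a * b + a * c"

definition associator :: "'a::nonassoc_ring \<Rightarrow> 'a \<Rightarrow> 'a \<Rightarrow> 'a" where
  "associator x y z = (x * y) * z - x * (y * z)"

class alternative_ring = nonassoc_ring +
  assumes left_alternative: "(x * x) * y - x * (x * y) = 0"
  and right_alternative: "(y * x) * x - y * (x * x) = 0"

definition lie :: "'a::nonassoc_ring \<Rightarrow> 'a \<Rightarrow> 'a" where
  "lie x y = x * y - y * x"

definition center :: "'a::nonassoc_ring set" where
  "center = {r. \<forall>x. lie r x = 0}"

text \<open>p_n(x_1,...,x_n) = [p_{n-1}(x_1,...,x_{n-1}), x_n], p_1(x) = x,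
  applied to a nonempty list [x_1,...,x_n].\<close>
definition pcomm :: "'a::nonassoc_ring list \<Rightarrow> 'a" where
  "pcomm xs = foldl lie (hd xs) (tl xs)"

definition mult_lie_n_derivation :: "nat \<Rightarrow> ('a::nonassoc_ring \<Rightarrow> 'a) \<Rightarrow> bool" where
  "mult_lie_n_derivation n D \<longleftrightarrow>
     (\<forall>xs. length xs = n \<longrightarrow>
        D (pcomm xs) = (\<Sum>i<n. pcomm (xs[i := D (xs ! i)])))"

definition mult_lie_type_derivation :: "('a::nonassoc_ring \<Rightarrow> 'a) \<Rightarrow> bool" where
  "mult_lie_type_derivation D \<longleftrightarrow> (\<exists>n\<ge>2. mult_lie_n_derivation n D)"

definition nontrivial_idempotent :: "'a::nonassoc_ring \<Rightarrow> bool" where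
  "nontrivial_idempotent e \<longleftrightarrow> e \<noteq> 0 \<and> e * e = e \<and> \<not> (\<forall>x. e * x = x \<and> x * e = x)"

text \<open>Left/right multiplication by e_1 and by e_2 (formal: e_2 a = a - e_1 a, a e_2 = a - a e_1).\<close>
definition lmul :: "'a::nonassoc_ring \<Rightarrow> nat \<Rightarrow> 'a \<Rightarrow> 'a" where
  "lmul e i a = (if i = 1 then e * a else a - e * a)"

definition rmul :: "'a::nonassoc_ring \<Rightarrow> nat \<Rightarrow> 'a \<Rightarrow> 'a" where
  "rmul e j a = (if j = 1 then a * e else a - a * e)"

text \<open>Peirce component R_ij = e_i R e_j = {(e_i x) e_j | x} (i, j \<in> {1,2}).\<close>
definition peirce :: "'a::nonassoc_ring \<Rightarrow> nat \<Rightarrow> nat \<Rightarrow> 'a set" where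
  "peirce e i j = {rmul e j (lmul e i x) | x. True}"

end

(*
  Write \<delta>(x, y) = D (x + y) - D x - D y (add_defect D x y). Since p_n(x, y_2, ..., y_n) is
  additive in x, the derivation identity shows that \<delta> commutes with p_n(_, y_2, ..., y_n) for
  every choice of the y_i. For L z = [z, e] (lie_right e z) this gives
  L^k \<delta>(x, y) = \<delta>(L^k x, L^k y) and L^k [\<delta>(x, y), z] = \<delta>(L^k [x, z], L^k [y, z])
  with k = n - 1 and k = 2n - 3 respectively.
  L vanishes on R11 + R22, is -1 on R12 and 1 on R21, and L^3 = L. Hence \<delta>(h, w) commutes
  with e whenever h does, and for off-diagonal w its brackets with the opposite off-diagonal
  component vanish, so it is central by (i) or (ii). Bracketing the central \<delta>(e, w) with
  e - u then yields \<delta>(u, v) = 0 for u in R12, v in R21 and \<delta>(a, b) = 0 for a, b in R12.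
  Finally \<delta>(a + b, c + d) commutes with e and with R12, hence is central, and
  D (a + b + c + d) - D a - D b - D c - D d = \<delta>(a + b, c + d) + \<delta>(a, b) + \<delta>(c, d).
*)

theory Submission
  imports Defs
begin

section \<open>Non-associative and alternative rings\<close>

subclass (in nonassoc_ring) mult_zero
proof
  fix a :: 'a
  have "0 * a + 0 * a = 0 * a" by (simp flip: na_distrib_right)
  then show "0 * a = 0" by simp
  have "a * 0 + a * 0 = a * 0" by (simp flip: na_distrib_left)
  then show "a * 0 = 0" by simp
qed

context nonassoc_ring
begin

lemma na_minus_mult_left: "- a * b = - (a * b)"
  using na_distrib_right[of a "- a" b] by (simp add: eq_neg_iff_add_eq_0 add.commute)

lemma na_minus_mult_right: "a * - b = - (a * b)"
  using na_distrib_left[of a b "- b"] by (simp add: eq_neg_iff_add_eq_0 add.commute)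

lemma na_left_diff_distrib: "(a - b) * c = a * c - b * c"
  using na_distrib_right[of a "- b" c] by (simp add: na_minus_mult_left)

lemma na_right_diff_distrib: "a * (b - c) = a * b - a * c"
  using na_distrib_left[of a b "- c"] by (simp add: na_minus_mult_right)

lemmas na_ring_distribs = na_distrib_left na_distrib_right
  na_left_diff_distrib na_right_diff_distrib na_minus_mult_left na_minus_mult_right

end

lemma associator_left_alternative: "associator x x (y::'a::alternative_ring) = 0"
  unfolding associator_def by (rule left_alternative)

lemma associator_right_alternative: "associator y x (x::'a::alternative_ring) = 0"
  unfolding associator_def by (rule right_alternative)

lemma associator_swap_left: "associator x y z = - associator y x (z::'a::alternative_ring)"
proof -
  have "associator (x + y) (x + y) z =
      associator x x z + associator y y z + (associator x y z + associator y x z)"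
    by (simp add: associator_def na_ring_distribs algebra_simps)
  then have "associator x y z + associator y x z = 0"
    by (simp add: associator_left_alternative)
  then show ?thesis by (simp add: eq_neg_iff_add_eq_0)
qed

lemma associator_swap_right: "associator x y z = - associator x z (y::'a::alternative_ring)"
proof -
  have "associator x (y + z) (y + z) =
      associator x y y + associator x z z + (associator x y z + associator x z y)"
    by (simp add: associator_def na_ring_distribs algebra_simps)
  then have "associator x y z + associator x z y = 0"
    by (simp add: associator_right_alternative)
  then show ?thesis by (simp add: eq_neg_iff_add_eq_0)
qed

lemma associator_swap_outer: "associator x y z = - associator z y (x::'a::alternative_ring)"
  by (metis associator_swap_left associator_swap_right)

lemma lie_add_left: "lie (a + b) c = lie a c + lie b (c::'a::nonassoc_ring)"
  by (simp add: lie_def na_ring_distribs algebra_simps)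

lemma lie_diff_left: "lie (a - b) c = lie a c - lie b (c::'a::nonassoc_ring)"
  by (simp add: lie_def na_ring_distribs algebra_simps)

lemma lie_diff_right: "lie a (b - c) = lie a b - lie a (c::'a::nonassoc_ring)"
  by (simp add: lie_def na_ring_distribs algebra_simps)

lemma lie_zero_left [simp]: "lie 0 (a::'a::nonassoc_ring) = 0"
  by (simp add: lie_def)

lemma lie_zero_right [simp]: "lie a (0::'a::nonassoc_ring) = 0"
  by (simp add: lie_def)

lemma lie_antisym: "lie a b = - lie b (a::'a::nonassoc_ring)"
  by (simp add: lie_def)

lemma center_add: "a \<in> center \<Longrightarrow> b \<in> center \<Longrightarrow> a + b \<in> (center::'a::nonassoc_ring set)"
  by (simp add: center_def lie_add_left)

lemma foldl_lie_add: "foldl lie (a + b) ys = foldl lie a ys + foldl lie (b::'a::nonassoc_ring) ys"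
  by (induction ys arbitrary: a b) (simp_all add: lie_add_left)

lemma foldl_lie_diff: "foldl lie (a - b) ys = foldl lie a ys - foldl lie (b::'a::nonassoc_ring) ys"
  by (induction ys arbitrary: a b) (simp_all add: lie_diff_left)

lemma foldl_lie_zero [simp]: "foldl lie (0::'a::nonassoc_ring) ys = 0"
  by (induction ys) simp_all

lemma foldl_lie_eq_zero: "(0::'a::nonassoc_ring) \<in> set ys \<Longrightarrow> foldl lie a ys = 0"
  by (induction ys arbitrary: a) auto

lemma pcomm_eq_zero: "(0::'a::nonassoc_ring) \<in> set xs \<Longrightarrow> pcomm xs = 0"
  by (cases xs) (auto simp: pcomm_def foldl_lie_eq_zero)

section \<open>The additivity defect of a Lie n-derivation\<close>

definition add_defect :: "('a::nonassoc_ring \<Rightarrow> 'a) \<Rightarrow> 'a \<Rightarrow> 'a \<Rightarrow> 'a" where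
  "add_defect D x y = D (x + y) - D x - D y"

lemma add_defect_commute: "add_defect D x y = add_defect D y x"
  by (simp add: add_defect_def algebra_simps)

lemma add_defect_cocycle:
  "add_defect D x (y + z) = add_defect D x y + add_defect D (x + y) z - add_defect D y z"
  by (simp add: add_defect_def algebra_simps)

lemma mult_lie_n_derivation_zero:
  assumes "mult_lie_n_derivation n D" and "n \<ge> 2"
  shows "D 0 = 0"
proof -
  let ?xs = "replicate n (0::'a)"
  have "D (pcomm ?xs) = (\<Sum>i<n. pcomm (?xs[i := D (?xs ! i)]))"
    using assms(1) by (simp add: mult_lie_n_derivation_def)
  moreover have "0 \<in> set (?xs[i := D 0])" for i
  proof -
    define j :: nat where "j = (if i = 0 then 1 else 0)"
    have "j < n" "j \<noteq> i" using \<open>n \<ge> 2\<close> by (auto simp: j_def)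
    then have "?xs[i := D 0] ! j = 0" by simp
    with \<open>j < n\<close> show ?thesis by (metis length_list_update length_replicate nth_mem)
  qed
  ultimately show ?thesis
    using \<open>n \<ge> 2\<close> by (simp add: pcomm_eq_zero)
qed

lemma mult_lie_n_derivation_defect:
  assumes "mult_lie_n_derivation (Suc m) D" and "length ys = m"
  shows "foldl lie (add_defect D x y) ys = add_defect D (foldl lie x ys) (foldl lie y ys)"
proof -
  define S where "S z = (\<Sum>i<m. foldl lie z (ys[i := D (ys ! i)]))" for z
  have D_foldl: "D (foldl lie z ys) = foldl lie (D z) ys + S z" for z
  proof -
    have "D (pcomm (z # ys)) = (\<Sum>i<Suc m. pcomm ((z # ys)[i := D ((z # ys) ! i)]))"
      using assms by (simp add: mult_lie_n_derivation_def)
    also have "\<dots> = pcomm (D z # ys) + (\<Sum>i<m. pcomm (z # ys[i := D (ys ! i)]))"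
      unfolding sum.lessThan_Suc_shift by simp
    finally show ?thesis by (simp add: pcomm_def S_def)
  qed
  have S_add: "S (x + y) = S x + S y"
    by (simp add: S_def foldl_lie_add sum.distrib)
  have "add_defect D (foldl lie x ys) (foldl lie y ys) =
      D (foldl lie (x + y) ys) - D (foldl lie x ys) - D (foldl lie y ys)"
    by (simp add: add_defect_def foldl_lie_add)
  also have "\<dots> = foldl lie (D (x + y)) ys - foldl lie (D x) ys - foldl lie (D y) ys"
    by (simp add: D_foldl S_add)
  finally show ?thesis
    by (simp add: add_defect_def foldl_lie_diff)
qed

section \<open>Peirce decomposition and right Lie multiplication by an idempotent\<close>

definition lie_right :: "'a::nonassoc_ring \<Rightarrow> 'a \<Rightarrow> 'a" where
  "lie_right e z = lie z e"

lemma lie_right_add: "lie_right e (a + b) = lie_right e a + lie_right e b"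
  by (simp add: lie_right_def lie_add_left)

lemma lie_right_diff: "lie_right e (a - b) = lie_right e a - lie_right e b"
  by (simp add: lie_right_def lie_diff_left)

lemma lie_right_zero [simp]: "lie_right e 0 = 0"
  by (simp add: lie_right_def)

lemma lie_right_minus: "lie_right e (- a) = - lie_right e a"
  using lie_right_diff[of e 0 a] by simp

lemma lie_right_self: "lie_right e e = 0"
  by (simp add: lie_right_def lie_def)

lemma lie_right_power_add: "(lie_right e ^^ k) (a + b) = (lie_right e ^^ k) a + (lie_right e ^^ k) b"
  by (induction k) (simp_all add: lie_right_add)

lemma lie_right_power_zero [simp]: "(lie_right e ^^ k) 0 = 0"
  by (induction k) simp_all

lemma lie_right_power_diff: "(lie_right e ^^ k) (a - b) = (lie_right e ^^ k) a - (lie_right e ^^ k) b"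
  by (induction k) (simp_all add: lie_right_diff)

lemma lie_right_power_minus: "(lie_right e ^^ k) (- a) = - (lie_right e ^^ k) a"
  by (induction k) (simp_all add: lie_right_minus)

lemma lie_right_power_diagonal: "lie_right e z = 0 \<Longrightarrow> k \<noteq> 0 \<Longrightarrow> (lie_right e ^^ k) z = 0"
  by (induction k) (auto simp: funpow_Suc_right simp del: funpow.simps)

lemma foldl_lie_replicate: "foldl lie z (replicate k e) = (lie_right e ^^ k) z"
  by (induction k arbitrary: z) (simp_all add: lie_right_def funpow_Suc_right del: funpow.simps)

locale alt_idempotent =
  fixes e :: "'a::alternative_ring"
  assumes idem: "e * e = e"
begin

lemma idem_mult_left: "e * (e * x) = e * x"
  using associator_left_alternative[of e x] by (simp add: associator_def idem)

lemma idem_mult_right: "(x * e) * e = x * e"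
  using associator_right_alternative[of x e] by (simp add: associator_def idem)

lemma idem_flexible: "e * (x * e) = (e * x) * e"
  using associator_swap_right[of e e x] associator_left_alternative[of e x]
  by (simp add: associator_def)

lemma peirce_iff:
  "x \<in> peirce e i j \<longleftrightarrow> e * x = (if i = 1 then x else 0) \<and> x * e = (if j = 1 then x else 0)"
proof
  assume "x \<in> peirce e i j"
  then obtain y where "x = rmul e j (lmul e i y)" by (auto simp: peirce_def)
  then show "e * x = (if i = 1 then x else 0) \<and> x * e = (if j = 1 then x else 0)"
    by (simp add: lmul_def rmul_def na_ring_distribs idem_mult_left idem_mult_right idem_flexible)
next
  assume "e * x = (if i = 1 then x else 0) \<and> x * e = (if j = 1 then x else 0)"
  then have "x = rmul e j (lmul e i x)"
    by (simp add: lmul_def rmul_def na_ring_distribs split: if_splits)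
  then show "x \<in> peirce e i j" by (auto simp: peirce_def)
qed

lemma peirce_add: "x \<in> peirce e i j \<Longrightarrow> y \<in> peirce e i j \<Longrightarrow> x + y \<in> peirce e i j"
  by (simp add: peirce_iff na_ring_distribs)

lemma peirce_minus: "x \<in> peirce e i j \<Longrightarrow> - x \<in> peirce e i j"
  by (simp add: peirce_iff na_ring_distribs)

lemma peirce_diff: "x \<in> peirce e i j \<Longrightarrow> y \<in> peirce e i j \<Longrightarrow> x - y \<in> peirce e i j"
  by (simp add: peirce_iff na_ring_distribs)

(* Each rule comes from comparing the associators (e, x, y), (x, e, y), (x, y, e) and
   (y, e, x), which agree up to sign in an alternative ring. *)
lemma mult_peirce_11_12:
  assumes "h \<in> peirce e 1 1" "t \<in> peirce e 1 2"
  shows "h * t \<in> peirce e 1 2" "t * h = 0"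
  using assms associator_swap_left[of e h t] associator_swap_right[of h e t]
    associator_swap_outer[of h e t]
  by (simp_all add: peirce_iff associator_def)

lemma mult_peirce_22_12:
  assumes "k \<in> peirce e 2 2" "t \<in> peirce e 1 2"
  shows "t * k \<in> peirce e 1 2" "k * t = 0"
  using assms associator_swap_left[of e t k] associator_swap_right[of t e k]
    associator_swap_outer[of t e k]
  by (simp_all add: peirce_iff associator_def)

lemma mult_peirce_11_21:
  assumes "h \<in> peirce e 1 1" "r \<in> peirce e 2 1"
  shows "r * h \<in> peirce e 2 1" "h * r = 0"
  using assms associator_swap_left[of e r h] associator_swap_right[of r e h]
    associator_swap_outer[of r e h]
  by (simp_all add: peirce_iff associator_def)

lemma mult_peirce_22_21:
  assumes "k \<in> peirce e 2 2" "r \<in> peirce e 2 1"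
  shows "k * r \<in> peirce e 2 1" "r * k = 0"
  using assms associator_swap_left[of e k r] associator_swap_right[of k e r]
    associator_swap_outer[of k e r]
  by (simp_all add: peirce_iff associator_def)

lemma mult_peirce_12_21:
  assumes "t \<in> peirce e 1 2" "v \<in> peirce e 2 1"
  shows "t * v \<in> peirce e 1 1" "v * t \<in> peirce e 2 2"
  using assms associator_swap_left[of e t v] associator_swap_right[of t e v]
    associator_swap_left[of e v t] associator_swap_right[of v e t]
  by (simp_all add: peirce_iff associator_def)

lemma mult_peirce_12_12:
  assumes "u \<in> peirce e 1 2" "t \<in> peirce e 1 2"
  shows "u * t \<in> peirce e 2 1"
  using assms associator_swap_left[of e u t] associator_swap_right[of u e t]
  by (simp add: peirce_iff associator_def)

lemma lie_right_peirce_11: "x \<in> peirce e 1 1 \<Longrightarrow> lie_right e x = 0"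
  by (simp add: lie_right_def lie_def peirce_iff)

lemma lie_right_peirce_22: "x \<in> peirce e 2 2 \<Longrightarrow> lie_right e x = 0"
  by (simp add: lie_right_def lie_def peirce_iff)

lemma lie_right_peirce_12: "x \<in> peirce e 1 2 \<Longrightarrow> lie_right e x = - x"
  by (simp add: lie_right_def lie_def peirce_iff)

lemma lie_right_peirce_21: "x \<in> peirce e 2 1 \<Longrightarrow> lie_right e x = x"
  by (simp add: lie_right_def lie_def peirce_iff)

lemma lie_right_power_peirce_12:
  "x \<in> peirce e 1 2 \<Longrightarrow> (lie_right e ^^ k) x = (if even k then x else - x)"
  by (induction k) (simp_all add: lie_right_peirce_12 lie_right_minus peirce_minus)

lemma lie_right_power_peirce_21: "x \<in> peirce e 2 1 \<Longrightarrow> (lie_right e ^^ k) x = x"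
  by (induction k) (simp_all add: lie_right_peirce_21)

lemma lie_right_cube: "lie_right e (lie_right e (lie_right e z)) = lie_right e z"
  by (simp add: lie_right_def lie_def na_ring_distribs idem idem_mult_left idem_mult_right
      idem_flexible algebra_simps)

lemma lie_right_power_eq_zero_iff:
  assumes "k \<noteq> 0"
  shows "(lie_right e ^^ k) z = 0 \<longleftrightarrow> lie_right e z = 0"
proof -
  have "(lie_right e ^^ k) z = lie_right e z \<or> (lie_right e ^^ k) z = lie_right e (lie_right e z)"
    using assms
  proof (induction k)
    case (Suc k)
    then show ?case by (cases "k = 0") (auto simp: lie_right_cube)
  qed simp
  then show ?thesis
    by (metis lie_right_cube lie_right_zero)
qed

(* Elements z with lie_right e z = 0, i.e. commuting with e, are called diagonal:
   they are exactly the elements of R11 + R22. *)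
lemma diagonal_decomp:
  assumes "lie_right e z = 0"
  shows "e * z \<in> peirce e 1 1" "z - e * z \<in> peirce e 2 2"
proof -
  from assms have ze: "z * e = e * z" by (simp add: lie_right_def lie_def)
  show "e * z \<in> peirce e 1 1"
    using idem_mult_right[of z] by (simp add: peirce_iff idem_mult_left ze)
  then show "z - e * z \<in> peirce e 2 2"
    by (simp add: peirce_iff na_ring_distribs idem_mult_left ze)
qed

lemma lie_diagonal_peirce_12:
  assumes "lie_right e z = 0" "t \<in> peirce e 1 2"
  shows "lie z t \<in> peirce e 1 2"
proof -
  have h: "e * z \<in> peirce e 1 1" and k: "z - e * z \<in> peirce e 2 2"
    using diagonal_decomp[OF assms(1)] by simp_all
  have "lie z t = lie (e * z) t + lie (z - e * z) t" by (simp flip: lie_add_left)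
  then show ?thesis
    using mult_peirce_11_12[OF h assms(2)] mult_peirce_22_12[OF k assms(2)]
    by (simp add: lie_def peirce_diff)
qed

lemma lie_diagonal_peirce_21:
  assumes "lie_right e z = 0" "r \<in> peirce e 2 1"
  shows "lie z r \<in> peirce e 2 1"
proof -
  have h: "e * z \<in> peirce e 1 1" and k: "z - e * z \<in> peirce e 2 2"
    using diagonal_decomp[OF assms(1)] by simp_all
  have "lie z r = lie (e * z) r + lie (z - e * z) r" by (simp flip: lie_add_left)
  then show ?thesis
    using mult_peirce_11_21[OF h assms(2)] mult_peirce_22_21[OF k assms(2)]
    by (simp add: lie_def peirce_diff)
qed

lemma lie_peirce_21_12_diagonal:
  "v \<in> peirce e 2 1 \<Longrightarrow> t \<in> peirce e 1 2 \<Longrightarrow> lie_right e (lie v t) = 0"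
  using mult_peirce_12_21[of t v]
  by (simp add: lie_def lie_right_diff lie_right_peirce_11 lie_right_peirce_22)

lemma lie_peirce_12_12: "u \<in> peirce e 1 2 \<Longrightarrow> t \<in> peirce e 1 2 \<Longrightarrow> lie u t \<in> peirce e 2 1"
  using mult_peirce_12_12[of u t] mult_peirce_12_12[of t u] by (simp add: lie_def peirce_diff)

end

section \<open>Lie-type derivations under conditions (i) and (ii)\<close>

locale lie_derivation_peirce = alt_idempotent e for e :: "'a::alternative_ring" +
  fixes D :: "'a \<Rightarrow> 'a" and n :: nat
  assumes cond_i: "\<And>a11 a22. a11 \<in> peirce e 1 1 \<Longrightarrow> a22 \<in> peirce e 2 2 \<Longrightarrow>
      (\<forall>x \<in> peirce e 1 2. lie (a11 + a22) x = 0) \<Longrightarrow> a11 + a22 \<in> center"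
    and cond_ii: "\<And>a11 a22. a11 \<in> peirce e 1 1 \<Longrightarrow> a22 \<in> peirce e 2 2 \<Longrightarrow>
      (\<forall>x \<in> peirce e 2 1. lie (a11 + a22) x = 0) \<Longrightarrow> a11 + a22 \<in> center"
    and derivation: "mult_lie_n_derivation n D"
    and n_ge_2: "n \<ge> 2"
begin

lemma lie_right_odd_power_peirce_12:
  assumes "x \<in> peirce e 1 2"
  shows "(lie_right e ^^ (2 * n - 3)) x = - x"
proof -
  have "odd (2 * n - 3)" using n_ge_2 by presburger
  with assms show ?thesis by (simp add: lie_right_power_peirce_12)
qed

lemma lie_right_odd_power_diagonal: "lie_right e z = 0 \<Longrightarrow> (lie_right e ^^ (2 * n - 3)) z = 0"
  using n_ge_2 by (simp add: lie_right_power_diagonal)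

lemma diagonal_if_lie_right_power: "(lie_right e ^^ (n - 1)) z = 0 \<Longrightarrow> lie_right e z = 0"
  using n_ge_2 lie_right_power_eq_zero_iff[of "n - 1"] by simp

lemma add_defect_zero_left [simp]: "add_defect D 0 y = 0"
  using mult_lie_n_derivation_zero[OF derivation n_ge_2] by (simp add: add_defect_def)

lemma add_defect_zero_right [simp]: "add_defect D x 0 = 0"
  using mult_lie_n_derivation_zero[OF derivation n_ge_2] by (simp add: add_defect_def)

lemma lie_right_power_add_defect:
  "(lie_right e ^^ (n - 1)) (add_defect D x y) =
    add_defect D ((lie_right e ^^ (n - 1)) x) ((lie_right e ^^ (n - 1)) y)"
  using mult_lie_n_derivation_defect[of "n - 1" D "replicate (n - 1) e"] derivation n_ge_2
  by (simp add: foldl_lie_replicate)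

lemma lie_right_power_lie_add_defect:
  "(lie_right e ^^ (2 * n - 3)) (lie (add_defect D x y) z) =
    add_defect D ((lie_right e ^^ (2 * n - 3)) (lie x z)) ((lie_right e ^^ (2 * n - 3)) (lie y z))"
proof -
  \<comment> \<open>2n - 3 = (n - 2) + (n - 1): bracket with the length n - 1 lists z # replicate (n - 2) e
    and replicate (n - 1) e in turn\<close>
  have split: "lie_right e ^^ (2 * n - 3) = (lie_right e ^^ (n - 1)) \<circ> (lie_right e ^^ (n - 2))"
    using n_ge_2 by (simp flip: funpow_add add: numeral_eq_Suc)
  have "(lie_right e ^^ (n - 2)) (lie (add_defect D x y) z) =
      add_defect D ((lie_right e ^^ (n - 2)) (lie x z)) ((lie_right e ^^ (n - 2)) (lie y z))"
    using mult_lie_n_derivation_defect[of "n - 1" D "z # replicate (n - 2) e"] derivation n_ge_2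
    by (simp add: foldl_lie_replicate)
  then show ?thesis
    by (simp only: split comp_apply lie_right_power_add_defect)
qed

lemma diagonal_central_12:
  assumes "lie_right e z = 0"
    and "\<And>t. t \<in> peirce e 1 2 \<Longrightarrow> (lie_right e ^^ (2 * n - 3)) (lie z t) = 0"
  shows "z \<in> center"
proof -
  have "\<forall>t \<in> peirce e 1 2. lie (e * z + (z - e * z)) t = 0"
    using assms lie_diagonal_peirce_12[OF assms(1)]
    by (auto simp: lie_right_odd_power_peirce_12)
  then show ?thesis
    using cond_i[OF diagonal_decomp[OF assms(1)]] by simp
qed

lemma diagonal_central_21:
  assumes "lie_right e z = 0"
    and "\<And>t. t \<in> peirce e 2 1 \<Longrightarrow> (lie_right e ^^ (2 * n - 3)) (lie z t) = 0"
  shows "z \<in> center"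
proof -
  have "\<forall>t \<in> peirce e 2 1. lie (e * z + (z - e * z)) t = 0"
    using assms lie_diagonal_peirce_21[OF assms(1)]
    by (auto simp: lie_right_power_peirce_21)
  then show ?thesis
    using cond_ii[OF diagonal_decomp[OF assms(1)]] by simp
qed

lemma add_defect_diagonal:
  assumes "lie_right e h = 0"
  shows "lie_right e (add_defect D h w) = 0"
proof -
  have "(lie_right e ^^ (n - 1)) (add_defect D h w) =
      add_defect D ((lie_right e ^^ (n - 1)) h) ((lie_right e ^^ (n - 1)) w)"
    by (rule lie_right_power_add_defect)
  also have "\<dots> = 0"
    using assms n_ge_2 by (simp add: lie_right_power_diagonal)
  finally show ?thesis
    by (rule diagonal_if_lie_right_power)
qed

lemma add_defect_diagonal_peirce_21_central:
  assumes h: "lie_right e h = 0" and v: "v \<in> peirce e 2 1"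
  shows "add_defect D h v \<in> center"
proof (rule diagonal_central_12[OF add_defect_diagonal[OF h]])
  fix t assume "t \<in> peirce e 1 2"
  then have "(lie_right e ^^ (2 * n - 3)) (lie v t) = 0"
    by (simp add: lie_peirce_21_12_diagonal[OF v] lie_right_odd_power_diagonal)
  then show "(lie_right e ^^ (2 * n - 3)) (lie (add_defect D h v) t) = 0"
    by (simp add: lie_right_power_lie_add_defect)
qed

lemma add_defect_diagonal_peirce_12_central:
  assumes h: "lie_right e h = 0" and u: "u \<in> peirce e 1 2"
  shows "add_defect D h u \<in> center"
proof (rule diagonal_central_21[OF add_defect_diagonal[OF h]])
  fix t assume "t \<in> peirce e 2 1"
  then have "(lie_right e ^^ (2 * n - 3)) (lie u t) = 0"
    by (simp add: lie_antisym[of u] lie_right_power_minus lie_peirce_21_12_diagonal[OF _ u]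
        lie_right_odd_power_diagonal)
  then show "(lie_right e ^^ (2 * n - 3)) (lie (add_defect D h u) t) = 0"
    by (simp add: lie_right_power_lie_add_defect)
qed

lemma add_defect_lie_central:
  assumes "add_defect D x y \<in> center"
  shows "add_defect D ((lie_right e ^^ (2 * n - 3)) (lie x z)) ((lie_right e ^^ (2 * n - 3)) (lie y z)) = 0"
  using assms by (simp add: center_def flip: lie_right_power_lie_add_defect)

lemma lie_idempotent_peirce_12: "x \<in> peirce e 1 2 \<Longrightarrow> lie e (e - x) = - x"
  by (simp add: lie_def peirce_iff na_ring_distribs idem)

lemma add_defect_peirce_12_21:
  assumes u: "u \<in> peirce e 1 2" and v: "v \<in> peirce e 2 1"
  shows "add_defect D u v = 0"
proof -
  have "lie v (e - u) = v - lie v u"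
    using lie_right_peirce_21[OF v] by (simp add: lie_diff_right lie_right_def)
  then have "(lie_right e ^^ (2 * n - 3)) (lie v (e - u)) = v"
    using v lie_peirce_21_12_diagonal[OF v u]
    by (simp add: lie_right_power_diff lie_right_power_peirce_21 lie_right_odd_power_diagonal)
  moreover have "(lie_right e ^^ (2 * n - 3)) (lie e (e - u)) = u"
    using u by (simp add: lie_idempotent_peirce_12 lie_right_power_minus lie_right_odd_power_peirce_12)
  ultimately show ?thesis
    using add_defect_lie_central[OF add_defect_diagonal_peirce_21_central[OF lie_right_self v]]
    by metis
qed

lemma add_defect_peirce_12_12:
  assumes a: "a \<in> peirce e 1 2" and b: "b \<in> peirce e 1 2"
  shows "add_defect D a b = 0"
proof -
  have ba: "lie b a \<in> peirce e 2 1" by (rule lie_peirce_12_12[OF b a])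
  have "lie b (e - a) = - b - lie b a"
    using lie_right_peirce_12[OF b] by (simp add: lie_diff_right lie_right_def)
  then have "(lie_right e ^^ (2 * n - 3)) (lie b (e - a)) = b - lie b a"
    using b ba
    by (simp add: lie_right_power_diff lie_right_power_minus lie_right_odd_power_peirce_12
        lie_right_power_peirce_21)
  moreover have "(lie_right e ^^ (2 * n - 3)) (lie e (e - a)) = a"
    using a by (simp add: lie_idempotent_peirce_12 lie_right_power_minus lie_right_odd_power_peirce_12)
  ultimately have "add_defect D a (b + lie a b) = 0"
    using add_defect_lie_central[OF add_defect_diagonal_peirce_12_central[OF lie_right_self b]]
    by (metis diff_conv_add_uminus lie_antisym)
  moreover have "a + b \<in> peirce e 1 2" by (rule peirce_add[OF a b])
  ultimately show ?thesis
    using add_defect_cocycle[of D a b "lie a b"] lie_antisym[of a b] peirce_minus[OF ba]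
      add_defect_peirce_12_21 b
    by simp
qed

lemma add_defect_offdiagonal:
  assumes "p \<in> peirce e 1 2" "q \<in> peirce e 2 1" "r \<in> peirce e 1 2"
  shows "add_defect D (p + q) r = 0"
  using add_defect_cocycle[of D r p q] assms peirce_add[of r 1 2 p]
  by (simp add: add_defect_commute[of D _ r] add_defect_peirce_12_12 add_defect_peirce_12_21)

lemma add_defect_peirce_sum_central:
  assumes a: "a \<in> peirce e 1 1" and b: "b \<in> peirce e 1 2"
    and c: "c \<in> peirce e 2 1" and d: "d \<in> peirce e 2 2"
  shows "add_defect D (a + b) (c + d) \<in> center"
proof -
  have a0: "lie_right e a = 0" by (rule lie_right_peirce_11[OF a])
  have d0: "lie_right e d = 0" by (rule lie_right_peirce_22[OF d])
  define x where "x = add_defect D (a + b) (c + d)"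
  have "(lie_right e ^^ (n - 1)) x =
      add_defect D ((lie_right e ^^ (n - 1)) (a + b)) ((lie_right e ^^ (n - 1)) (c + d))"
    unfolding x_def by (rule lie_right_power_add_defect)
  also have "\<dots> = add_defect D ((lie_right e ^^ (n - 1)) b) c"
    using a0 d0 c n_ge_2
    by (simp add: lie_right_power_add lie_right_power_diagonal lie_right_power_peirce_21)
  also have "\<dots> = 0"
    using b c by (simp add: lie_right_power_peirce_12 peirce_minus add_defect_peirce_12_21)
  finally have x0: "lie_right e x = 0"
    by (rule diagonal_if_lie_right_power)
  have "x \<in> center"
  proof (rule diagonal_central_12[OF x0])
    fix t assume t: "t \<in> peirce e 1 2"
    have "(lie_right e ^^ (2 * n - 3)) (lie x t) =
        add_defect D (- lie a t + lie b t) (- lie d t)"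
      using lie_diagonal_peirce_12[OF a0 t] lie_diagonal_peirce_12[OF d0 t]
        lie_peirce_12_12[OF b t] lie_peirce_21_12_diagonal[OF c t]
      by (simp add: x_def lie_right_power_lie_add_defect lie_add_left lie_right_power_add
          lie_right_odd_power_peirce_12 lie_right_power_peirce_21 lie_right_odd_power_diagonal)
    also have "\<dots> = 0"
      by (intro add_defect_offdiagonal peirce_minus lie_diagonal_peirce_12 lie_peirce_12_12 a0 b d0 t)
    finally show "(lie_right e ^^ (2 * n - 3)) (lie x t) = 0" .
  qed
  then show ?thesis by (simp add: x_def)
qed

lemma additive_modulo_center:
  assumes a: "a \<in> peirce e 1 1" and b: "b \<in> peirce e 1 2"
    and c: "c \<in> peirce e 2 1" and d: "d \<in> peirce e 2 2"
  shows "\<exists>z \<in> center. D (a + b + c + d) = D a + D b + D c + D d + z"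
proof -
  let ?z = "add_defect D (a + b) (c + d) + add_defect D a b + add_defect D c d"
  have "add_defect D a b \<in> center"
    using add_defect_diagonal_peirce_12_central[OF lie_right_peirce_11[OF a] b] .
  moreover have "add_defect D c d \<in> center"
    using add_defect_diagonal_peirce_21_central[OF lie_right_peirce_22[OF d] c]
    by (simp add: add_defect_commute)
  ultimately have "?z \<in> center"
    using add_defect_peirce_sum_central[OF a b c d] by (simp add: center_add)
  moreover have "D (a + b + c + d) = D a + D b + D c + D d + ?z"
    by (simp add: add_defect_def algebra_simps)
  ultimately show ?thesis by blast
qed

end

theorem lemma2p6:
  fixes e :: "'a::alternative_ring" and D :: "'a \<Rightarrow> 'a"
  assumes idem: "nontrivial_idempotent e"
    and cond_i: "\<And>a11 a22. a11 \<in> peirce e 1 1 \<Longrightarrow> a22 \<in> peirce e 2 2 \<Longrightarrow>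
          (\<forall>x \<in> peirce e 1 2. lie (a11 + a22) x = 0) \<Longrightarrow> a11 + a22 \<in> center"
    and cond_ii: "\<And>a11 a22. a11 \<in> peirce e 1 1 \<Longrightarrow> a22 \<in> peirce e 2 2 \<Longrightarrow>
          (\<forall>x \<in> peirce e 2 1. lie (a11 + a22) x = 0) \<Longrightarrow> a11 + a22 \<in> center"
    and D: "mult_lie_type_derivation D"
    and a: "a11 \<in> peirce e 1 1" and b: "b12 \<in> peirce e 1 2"
    and c: "c21 \<in> peirce e 2 1" and d: "d22 \<in> peirce e 2 2"
  shows "\<exists>z \<in> center. D (a11 + b12 + c21 + d22) = D a11 + D b12 + D c21 + D d22 + z"
proof -
  \<comment> \<open>only e * e = e is used\<close>
  obtain n where "n \<ge> 2" "mult_lie_n_derivation n D"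
    using D by (auto simp: mult_lie_type_derivation_def)
  moreover have "e * e = e"
    using idem by (simp add: nontrivial_idempotent_def)
  ultimately interpret lie_derivation_peirce e D n
    using cond_i cond_ii by unfold_locales
  show ?thesis
    by (rule additive_modulo_center[OF a b c d])
qed

end
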